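(* Let $Q\in\mathbb{R}^{n\times n}$ be symmetric nonsingular with eigenvalues $\lambda_1\ge\dots\ge\lambda_{n-1}>0>\lambda_n$ and orthonormal eigenvectors $u_1,\dots,u_n$ ($Qu_i=\lambda_iu_i$), and let $A\in\mathbb{R}^{n\times n}$. If $\eta\in\mathbb{R}$ satisfies $A^TQ+QA-\eta Q\preceq0$, then $$\max_{1\le i\le n-1}u_i^T(A^T+A)u_i\le\eta\le u_n^T(A^T+A)u_n.$$
   Context: $\preceq0$ denotes negative semidefiniteness. *)

theory Defs
  imports "HOL-Analysis.Analysis"
begin

definition neg_semidef :: "real^'n^'n \<Rightarrow> bool" where
  "neg_semidef M \<longleftrightarrow> (\<forall>x. x \<bullet> (M *v x) \<le> 0)"

end

theory Submission
  imports Defs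
begin

text \<open>
  Write M = A^T Q + Q A - eta Q.  If Q is symmetric and Q x = l x, then
  the quadratic form of M at x collapses to a scalar expression:
      x^T M x = l * (x^T (A^T + A) x - eta * |x|^2).
  Negative semidefiniteness of M makes the left-hand side nonpositive, so for a unit
  eigenvector the number x^T (A^T + A) x - eta has the sign opposite to l (or vanishes).
  Applied to the eigenvectors u_1, ..., u_{n-1} with positive eigenvalues this yields the
  upper bounds u_i^T (A^T + A) u_i <= eta, and applied to u_n with negative eigenvalue the
  lower bound eta <= u_n^T (A^T + A) u_n.
\<close>

lemma inner_transpose_mult_right:
  fixes A :: "real^'n^'m" and x :: "real^'n" and y :: "real^'m"
  shows "x \<bullet> (transpose A *v y) = (A *v x) \<bullet> y"
  by (metis dot_lmul_matrix inner_commute transpose_matrix_vector transpose_transpose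
      vector_transpose_matrix)

lemma lyapunov_form_at_eigenvector:
  fixes Q A :: "real^'n^'n" and x :: "real^'n"
  assumes sym: "transpose Q = Q" and ev: "Q *v x = l *\<^sub>R x"
  shows "x \<bullet> ((transpose A ** Q + Q ** A - \<eta> *\<^sub>R Q) *v x)
         = l * (x \<bullet> ((transpose A + A) *v x) - \<eta> * (x \<bullet> x))"
proof -
  have left: "x \<bullet> ((transpose A ** Q) *v x) = l * (x \<bullet> (transpose A *v x))"
    by (simp add: matrix_vector_mul_assoc[symmetric] ev matrix_vector_mult_scaleR)
  have "x \<bullet> ((Q ** A) *v x) = x \<bullet> (transpose Q *v (A *v x))"
    by (simp add: sym matrix_vector_mul_assoc)
  also have "\<dots> = (Q *v x) \<bullet> (A *v x)"
    by (rule inner_transpose_mult_right)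
  finally have right: "x \<bullet> ((Q ** A) *v x) = l * (x \<bullet> (A *v x))"
    by (simp add: ev)
  have shift: "x \<bullet> ((\<eta> *\<^sub>R Q) *v x) = \<eta> * l * (x \<bullet> x)"
    by (simp add: scaleR_matrix_vector_assoc[symmetric] ev)
  show ?thesis
    by (simp add: matrix_vector_mult_add_rdistrib matrix_vector_mult_diff_rdistrib
        inner_add_right inner_diff_right left right shift algebra_simps)
qed

lemma lyapunov_eigenvector_sign:
  fixes Q A :: "real^'n^'n" and x :: "real^'n"
  assumes sym: "transpose Q = Q" and ev: "Q *v x = l *\<^sub>R x" and unit: "x \<bullet> x = 1"
    and nsd: "neg_semidef (transpose A ** Q + Q ** A - \<eta> *\<^sub>R Q)"
  shows "l * (x \<bullet> ((transpose A + A) *v x) - \<eta>) \<le> 0"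
proof -
  have "x \<bullet> ((transpose A ** Q + Q ** A - \<eta> *\<^sub>R Q) *v x) \<le> 0"
    using nsd by (simp add: neg_semidef_def)
  then show ?thesis
    using lyapunov_form_at_eigenvector[OF sym ev, of A \<eta>] unit by simp
qed

lemma lyapunov_bound_pos_eigenvalue:
  fixes Q A :: "real^'n^'n" and x :: "real^'n"
  assumes "transpose Q = Q" and "Q *v x = l *\<^sub>R x" and "x \<bullet> x = 1" and "l > 0"
    and "neg_semidef (transpose A ** Q + Q ** A - \<eta> *\<^sub>R Q)"
  shows "x \<bullet> ((transpose A + A) *v x) \<le> \<eta>"
  using lyapunov_eigenvector_sign[OF assms(1-3,5)] \<open>l > 0\<close>
  by (simp add: mult_le_0_iff)

lemma lyapunov_bound_neg_eigenvalue:
  fixes Q A :: "real^'n^'n" and x :: "real^'n"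
  assumes "transpose Q = Q" and "Q *v x = l *\<^sub>R x" and "x \<bullet> x = 1" and "l < 0"
    and "neg_semidef (transpose A ** Q + Q ** A - \<eta> *\<^sub>R Q)"
  shows "\<eta> \<le> x \<bullet> ((transpose A + A) *v x)"
  using lyapunov_eigenvector_sign[OF assms(1-3,5)] \<open>l < 0\<close>
  by (simp add: mult_le_0_iff)

theorem corollary3p22:
  fixes Q A :: "real^'n^'n" and lam :: "nat \<Rightarrow> real" and u :: "nat \<Rightarrow> real^'n"
    and \<eta> :: real
  assumes sym: "transpose Q = Q"
    and nonsing: "invertible Q"
    and eig: "\<And>i. i < CARD('n) \<Longrightarrow> Q *v u i = lam i *\<^sub>R u i"
    and orth: "\<And>i j. i < CARD('n) \<Longrightarrow> j < CARD('n) \<Longrightarrow> u i \<bullet> u j = (if i = j then 1 else 0)"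
    and sorted: "\<And>i j. i \<le> j \<Longrightarrow> j < CARD('n) - 1 \<Longrightarrow> lam j \<le> lam i"
    and pos: "\<And>i. i < CARD('n) - 1 \<Longrightarrow> lam i > 0"
    and neg: "lam (CARD('n) - 1) < 0"
    and nsd: "neg_semidef (transpose A ** Q + Q ** A - \<eta> *\<^sub>R Q)"
  shows "(\<forall>i < CARD('n) - 1. u i \<bullet> ((transpose A + A) *v u i) \<le> \<eta>)
         \<and> \<eta> \<le> u (CARD('n) - 1) \<bullet> ((transpose A + A) *v u (CARD('n) - 1))"
proof (intro conjI allI impI)
  fix i assume i: "i < CARD('n) - 1"
  then have "i < CARD('n)" by simp
  moreover from this have "u i \<bullet> u i = 1" using orth by simp
  ultimately show "u i \<bullet> ((transpose A + A) *v u i) \<le> \<eta>"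
    using lyapunov_bound_pos_eigenvalue[OF sym eig _ pos[OF i] nsd] by blast
next
  have "CARD('n) - 1 < CARD('n)" by simp
  moreover from this have "u (CARD('n) - 1) \<bullet> u (CARD('n) - 1) = 1" using orth by simp
  ultimately show "\<eta> \<le> u (CARD('n) - 1) \<bullet> ((transpose A + A) *v u (CARD('n) - 1))"
    using lyapunov_bound_neg_eigenvalue[OF sym eig _ neg nsd] by blast
qed

end
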